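(* Let $f(x)=\mathbb{E}[F(x,\omega)]$ have nonempty solution set $X^*$ and optimal value $f^*$. Suppose: for every $\omega$, $F(\cdot,\omega)$ is convex and $C^1$; $f$ is $C^1$ with $L$-Lipschitz gradient; with $\bar w_{k,N_k}\triangleq\nabla f(x_k)-\frac1{N_k}\sum_{j=1}^{N_k}\nabla_xF(x_k,\omega_{j,k})$ there are $\nu_1,\nu_2>0$ with $\mathbb{E}[\|\bar w_{k,N_k}\|^2\mid\mathcal{F}_k]\le\frac{\nu_1^2\|x_k\|^2+\nu_2^2}{N_k}$ and $\mathbb{E}[\bar w_{k,N_k}\mid\mathcal{F}_k]=0$ a.s.; each $H_k$ is $\mathcal{F}_k$-measurable, symmetric positive definite, and $\underline\lambda\mathbf{I}\preceq H_k\preceq\overline\lambda_k\mathbf{I}$ a.s. with $\underline\lambda>0$, $\overline\lambda_k>0$; and $f$ has the quadratic growth property: there is $\alpha>0$ with $f(x)\ge f^*+\frac\alpha2\mathrm{dist}^2(x,X^* )$ for all $x$. Let $x_{k+1}=x_k-\gamma_kH_k\frac1{N_k}\sum_{j=1}^{N_k}\nabla_xF_{\mu_k}(x_k,\omega_{j,k})$, where $\{\mu_k\}$ is a non-increasing sequence of positive scalars and $\gamma_k\le\frac{\underline\lambda}{\overline\lambda_k^2(L+\mu_0)}$ for all $k\ge0$. Then for all $k$, $$\mathbb{E}[f_{\mu_{k+1}}(x_{k+1})\mid\mathcal{F}_k]-f^*\le(1-\underline\lambda\mu_k\gamma_k)(f_{\mu_k}(x_k)-f^* )+\frac{\underline\lambda\,\mathrm{dist}^2(x_0,X^*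 )}{2}\mu_k^2\gamma_k+\frac{(L+\mu_k)\overline\lambda_k^2(\nu_1^2\|x_k\|^2+\nu_2^2)}{2N_k}\gamma_k^2.$$
   Context: $F_\mu(x,\omega)\triangleq F(x,\omega)+\frac\mu2\|x-x_0\|^2$ and $f_\mu(x)\triangleq f(x)+\frac\mu2\|x-x_0\|^2$ for a fixed initial point $x_0$. $\omega_{1,k},\dots,\omega_{N_k,k}$ are the samples at iteration $k$; $\mathcal{F}_k=\sigma\{x_0,\dots,x_{k-1}\}$; $\mathrm{dist}(x,X)$ is the Euclidean distance from $x$ to $X$. *)

theory Defs
  imports "HOL-Analysis.Analysis" "HOL-Probability.Probability"
begin

definition solset :: "('a \<Rightarrow> real) \<Rightarrow> 'a set" where
  "solset f = {x. \<forall>y. f x \<le> f y}"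

definition optval :: "('a \<Rightarrow> real) \<Rightarrow> real" where
  "optval f = (INF x. f x)"

definition regf :: "('a::real_normed_vector \<Rightarrow> real) \<Rightarrow> 'a \<Rightarrow> real \<Rightarrow> 'a \<Rightarrow> real" where
  "regf g x0 \<mu> x = g x + \<mu> / 2 * (norm (x - x0))\<^sup>2"

end

theory Submission
  imports Defs
begin

text \<open>
  The regularised function \<open>f\<^sub>\<mu> = f + \<mu>/2 |x - x\<^sub>0|\<^sup>2\<close> is \<open>\<mu>\<close>-strongly convex and its gradient
  \<open>g\<close> is \<open>(L + \<mu>)\<close>-Lipschitz. If \<open>\<lambda> I \<le> H \<le> \<Lambda> I\<close> and \<open>w\<close> is the sampling error of the gradient,
  the descent lemma applied to the step \<open>x' = x - \<gamma> H (g - w)\<close> gives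
  \<open>f\<^sub>\<mu>(x') \<le> f\<^sub>\<mu>(x) - \<gamma>\<lambda>/2 |g|\<^sup>2 + \<langle>c, w\<rangle> + (L + \<mu>) \<Lambda>\<^sup>2 \<gamma>\<^sup>2/2 |w|\<^sup>2\<close>
  with \<open>c\<close> depending only on \<open>x\<close> and \<open>H\<close>. Strong convexity gives \<open>|g|\<^sup>2 \<ge> 2\<mu> (f\<^sub>\<mu>(x) - f\<^sub>\<mu>(z))\<close>,
  and for the solution \<open>z\<close> nearest to \<open>x\<^sub>0\<close> we have \<open>f\<^sub>\<mu>(z) = f\<^sup>* + \<mu>/2 dist\<^sup>2(x\<^sub>0, X\<^sup>*)\<close>.
  Conditioning on \<open>\<F>\<^sub>k\<close> kills \<open>\<langle>c, w\<rangle>\<close>, because \<open>c\<close> is \<open>\<F>\<^sub>k\<close>-measurable and \<open>w\<close> is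
  conditionally centred, and the variance bound controls \<open>|w|\<^sup>2\<close>. Decreasing the regularisation
  parameter from \<open>\<mu>\<^sub>k\<close> to \<open>\<mu>\<^sub>k\<^sub>+\<^sub>1\<close> only decreases \<open>f\<^sub>\<mu>(x')\<close>.
\<close>

section \<open>Quadratic forms of symmetric matrices\<close>

lemma matrix_vector_inner_symmetric:
  fixes A :: "real^'n^'n"
  assumes "transpose A = A"
  shows "u \<bullet> (A *v v) = v \<bullet> (A *v u)"
proof -
  have "u \<bullet> (A *v v) = (transpose A *v u) \<bullet> v" by (simp add: dot_lmul_matrix)
  also have "\<dots> = v \<bullet> (A *v u)" using assms by (simp add: inner_commute)
  finally show ?thesis .
qed

lemma quadratic_form_Cauchy_Schwarz:
  fixes A :: "real^'n^'n"
  assumes sym: "transpose A = A" and pd: "\<And>v. v \<noteq> 0 \<Longrightarrow> 0 < v \<bullet> (A *v v)"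
  shows "(u \<bullet> (A *v v))\<^sup>2 \<le> (u \<bullet> (A *v u)) * (v \<bullet> (A *v v))"
proof (cases "v = 0")
  case True
  then show ?thesis by (simp add: matrix_vector_mult_0_right)
next
  case False
  then have qv: "0 < v \<bullet> (A *v v)" by (rule pd)
  define r where "r = (u \<bullet> (A *v v)) / (v \<bullet> (A *v v))"
  have "0 \<le> (u - r *\<^sub>R v) \<bullet> (A *v (u - r *\<^sub>R v))"
    using pd by (cases "u - r *\<^sub>R v = 0") (auto intro: less_imp_le)
  also have "\<dots> = u \<bullet> (A *v u) - 2 * r * (u \<bullet> (A *v v)) + r\<^sup>2 * (v \<bullet> (A *v v))"
    using matrix_vector_inner_symmetric[OF sym, of v u]
    by (simp add: matrix_vector_mult_diff_distrib matrix_vector_mult_scaleR inner_diff_left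
        inner_diff_right power2_eq_square algebra_simps)
  also have "\<dots> = u \<bullet> (A *v u) - (u \<bullet> (A *v v))\<^sup>2 / (v \<bullet> (A *v v))"
    unfolding r_def using qv by (simp add: field_simps power2_eq_square)
  finally show ?thesis using qv by (simp add: field_simps)
qed

lemma norm_matrix_vector_le:
  fixes A :: "real^'n^'n"
  assumes sym: "transpose A = A" and pd: "\<And>v. v \<noteq> 0 \<Longrightarrow> 0 < v \<bullet> (A *v v)"
    and upper: "\<And>v. v \<bullet> (A *v v) \<le> hi * (v \<bullet> v)"
  shows "norm (A *v v) \<le> hi * norm v"
proof (cases "v = 0")
  case True
  then show ?thesis by (simp add: matrix_vector_mult_0_right)
next
  case False
  have qv: "0 < v \<bullet> (A *v v)" using False by (rule pd)
  with upper[of v] have hi: "0 < hi" by (smt (verit) inner_ge_zero mult_nonpos_nonneg)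
  have qAv: "(A *v v) \<bullet> (A *v (A *v v)) \<le> hi * (norm (A *v v))\<^sup>2"
    using upper by (simp add: power2_norm_eq_inner)
  have "(norm (A *v v))\<^sup>2 * (norm (A *v v))\<^sup>2 \<le> ((A *v v) \<bullet> (A *v (A *v v))) * (v \<bullet> (A *v v))"
    unfolding power2_norm_eq_inner using quadratic_form_Cauchy_Schwarz[OF sym pd, of "A *v v" v]
    by (simp add: power2_eq_square)
  also have "\<dots> \<le> (norm (A *v v))\<^sup>2 * (hi * (v \<bullet> (A *v v)))"
    using qAv qv by (simp add: mult_right_mono mult.commute mult.left_commute)
  finally have CS: "(norm (A *v v))\<^sup>2 * (norm (A *v v))\<^sup>2 \<le> (norm (A *v v))\<^sup>2 * (hi * (v \<bullet> (A *v v)))" .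
  have "(norm (A *v v))\<^sup>2 \<le> hi * (v \<bullet> (A *v v))"
  proof (cases "A *v v = 0")
    case False
    then have "0 < (norm (A *v v))\<^sup>2" by simp
    with CS show ?thesis by (simp only: mult_le_cancel_left_pos)
  qed (use hi qv in simp)
  also have "\<dots> \<le> hi * (hi * (norm v)\<^sup>2)"
    using upper[of v] hi by (simp add: power2_norm_eq_inner)
  finally have "(norm (A *v v))\<^sup>2 \<le> (hi * norm v)\<^sup>2" by (simp add: power2_eq_square algebra_simps)
  then show ?thesis by (rule power2_le_imp_le) (use hi in simp)
qed

section \<open>Smooth convex functions and their regularisation\<close>

lemma has_real_derivative_along_line:
  fixes f :: "'a::real_inner \<Rightarrow> real"
  assumes deriv: "\<And>y. (f has_derivative (\<lambda>h. gf y \<bullet> h)) (at y)"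
  shows "((\<lambda>t. f (x + t *\<^sub>R d)) has_real_derivative (gf (x + t *\<^sub>R d) \<bullet> d)) (at t)"
proof -
  have "((\<lambda>t. x + t *\<^sub>R d) has_derivative (\<lambda>h. h *\<^sub>R d)) (at t)"
    by (auto intro!: derivative_eq_intros)
  from has_derivative_compose[OF this deriv]
  have "((\<lambda>t. f (x + t *\<^sub>R d)) has_derivative (\<lambda>h. (gf (x + t *\<^sub>R d) \<bullet> d) * h)) (at t)"
    by (simp add: o_def mult.commute)
  then show ?thesis by (simp add: has_field_derivative_def)
qed

lemma lipschitz_gradient_upper_bound:
  fixes f :: "'a::real_inner \<Rightarrow> real"
  assumes deriv: "\<And>y. (f has_derivative (\<lambda>h. gf y \<bullet> h)) (at y)"
    and Lip: "L-lipschitz_on UNIV gf"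
  shows "f y \<le> f x + gf x \<bullet> (y - x) + L / 2 * (norm (y - x))\<^sup>2"
proof -
  define d where "d = y - x"
  define \<phi> where "\<phi> t = f (x + t *\<^sub>R d) - t * (gf x \<bullet> d) - L / 2 * t\<^sup>2 * (norm d)\<^sup>2" for t
  have "\<phi> 1 \<le> \<phi> 0"
  proof (rule DERIV_nonpos_imp_nonincreasing[of 0 1])
    fix t :: real assume t: "0 \<le> t" "t \<le> 1"
    let ?D = "(gf (x + t *\<^sub>R d) - gf x) \<bullet> d - L * t * (norm d)\<^sup>2"
    have D: "(\<phi> has_real_derivative ?D) (at t)"
      unfolding \<phi>_def inner_diff_left
      by (rule derivative_eq_intros has_real_derivative_along_line[OF deriv] refl | simp)+
    have "(gf (x + t *\<^sub>R d) - gf x) \<bullet> d \<le> norm (gf (x + t *\<^sub>R d) - gf x) * norm d"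
      by (rule norm_cauchy_schwarz)
    also have "\<dots> \<le> L * (t * norm d) * norm d"
      using lipschitz_onD[OF Lip, of "x + t *\<^sub>R d" x] t by (intro mult_right_mono) (auto simp: dist_norm)
    finally show "\<exists>D. (\<phi> has_real_derivative D) (at t) \<and> D \<le> 0"
      using D by (auto simp: power2_eq_square algebra_simps)
  qed simp
  then show ?thesis unfolding \<phi>_def d_def by simp
qed

lemma convex_on_gradient_lower_bound:
  fixes f :: "'a::real_inner \<Rightarrow> real"
  assumes deriv: "\<And>y. (f has_derivative (\<lambda>h. gf y \<bullet> h)) (at y)"
    and cvx: "convex_on UNIV f"
  shows "f x + gf x \<bullet> (y - x) \<le> f y"
proof -
  define d where "d = y - x"
  define \<phi> where "\<phi> t = f (x + t *\<^sub>R d)" for t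
  have "convex_on UNIV \<phi>"
  proof (rule convex_onI)
    fix t s u :: real assume "0 < t" "t < 1"
    then show "\<phi> ((1 - t) *\<^sub>R s + t *\<^sub>R u) \<le> (1 - t) * \<phi> s + t * \<phi> u"
      using convex_onD[OF cvx, of t "x + s *\<^sub>R d" "x + u *\<^sub>R d"]
      by (simp add: \<phi>_def algebra_simps)
  qed simp
  moreover have "(\<phi> has_real_derivative (gf x \<bullet> d)) (at 0)"
    unfolding \<phi>_def using has_real_derivative_along_line[OF deriv, of x d 0] by simp
  ultimately have "gf x \<bullet> d * (1 - 0) \<le> \<phi> 1 - \<phi> 0"
    by (intro convex_on_imp_above_tangent[of UNIV]) auto
  then show ?thesis unfolding \<phi>_def d_def by simp
qed

lemma convex_on_integral:
  assumes "\<And>\<omega>. convex_on UNIV (\<lambda>y. F y \<omega>)" and "\<And>y. integrable P (F y)"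
  shows "convex_on UNIV (\<lambda>y. \<integral>\<omega>. F y \<omega> \<partial>P)"
proof (rule convex_onI)
  fix t :: real and y z
  assume "0 < t" "t < 1"
  then have "(\<integral>\<omega>. F ((1 - t) *\<^sub>R y + t *\<^sub>R z) \<omega> \<partial>P) \<le> (\<integral>\<omega>. (1 - t) * F y \<omega> + t * F z \<omega> \<partial>P)"
    using assms convex_onD[OF assms(1)] by (intro integral_mono) auto
  also have "\<dots> = (1 - t) * (\<integral>\<omega>. F y \<omega> \<partial>P) + t * (\<integral>\<omega>. F z \<omega> \<partial>P)"
    using assms(2) by simp
  finally show "(\<integral>\<omega>. F ((1 - t) *\<^sub>R y + t *\<^sub>R z) \<omega> \<partial>P)
      \<le> (1 - t) * (\<integral>\<omega>. F y \<omega> \<partial>P) + t * (\<integral>\<omega>. F z \<omega> \<partial>P)" .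
qed simp

lemma regf_has_derivative:
  assumes deriv: "\<And>y. (f has_derivative (\<lambda>h. gf y \<bullet> h)) (at y)"
  shows "(regf f x0 \<mu> has_derivative (\<lambda>h. (gf y + \<mu> *\<^sub>R (y - x0)) \<bullet> h)) (at y)"
proof -
  have "((\<lambda>x. f x + \<mu> / 2 * ((x - x0) \<bullet> (x - x0))) has_derivative
          (\<lambda>h. gf y \<bullet> h + \<mu> / 2 * ((y - x0) \<bullet> h + h \<bullet> (y - x0)))) (at y)"
    by (rule derivative_eq_intros deriv refl | simp)+
  then show ?thesis
    by (simp add: regf_def[abs_def] power2_norm_eq_inner inner_add_left inner_commute algebra_simps)
qed

lemma lipschitz_on_regf_gradient:
  fixes gf :: "'a::real_normed_vector \<Rightarrow> 'a"
  assumes "L-lipschitz_on UNIV gf" and "0 \<le> \<mu>"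
  shows "(L + \<mu>)-lipschitz_on UNIV (\<lambda>y. gf y + \<mu> *\<^sub>R (y - x0))"
proof -
  have "(1 + 0)-lipschitz_on UNIV (\<lambda>y. y - x0)"
    by (intro lipschitz_on_diff lipschitz_on_id lipschitz_on_constant)
  then have "\<mu>-lipschitz_on UNIV (\<lambda>y. \<mu> *\<^sub>R (y - x0))"
    using lipschitz_on_cmult_nonneg[OF _ assms(2)] by fastforce
  then show ?thesis by (rule lipschitz_on_add[OF assms(1)])
qed

lemma regf_strongly_convex:
  assumes deriv: "\<And>y. (f has_derivative (\<lambda>h. gf y \<bullet> h)) (at y)"
    and cvx: "convex_on UNIV f"
  shows "regf f x0 \<mu> x + (gf x + \<mu> *\<^sub>R (x - x0)) \<bullet> (y - x) + \<mu> / 2 * (norm (y - x))\<^sup>2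
           \<le> regf f x0 \<mu> y"
proof -
  define a b p where "a = (norm (x - x0))\<^sup>2" and "b = (norm (y - x))\<^sup>2" and "p = (x - x0) \<bullet> (y - x)"
  have "(norm (y - x0))\<^sup>2 = a + 2 * p + b"
    using dot_norm[of "x - x0" "y - x"] by (simp add: a_def b_def p_def)
  then show ?thesis
    using convex_on_gradient_lower_bound[OF deriv cvx, of x y]
    unfolding regf_def inner_add_left inner_scaleR_left a_def[symmetric] b_def[symmetric] p_def[symmetric]
    by (simp add: algebra_simps)
qed

lemma strongly_convex_gradient_dominated:
  fixes g :: "'a::real_inner"
  assumes "0 < \<mu>" and "a + g \<bullet> d + \<mu> / 2 * (norm d)\<^sup>2 \<le> b"
  shows "\<mu> * (a - b) \<le> (norm g)\<^sup>2 / 2"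
proof -
  have "0 \<le> (norm (g + \<mu> *\<^sub>R d))\<^sup>2" by simp
  also have "\<dots> = (norm g)\<^sup>2 + 2 * \<mu> * (g \<bullet> d) + \<mu>\<^sup>2 * (norm d)\<^sup>2"
    using dot_norm[of g "\<mu> *\<^sub>R d"] by (simp add: power_mult_distrib)
  finally show ?thesis
    using mult_left_mono[OF assms(2), of \<mu>] assms(1) by (simp add: algebra_simps power2_eq_square)
qed

lemma preconditioned_gradient_step_descent:
  fixes h :: "real^'n \<Rightarrow> real" and H :: "real^'n^'n"
  assumes deriv: "\<And>y. (h has_derivative (\<lambda>v. G y \<bullet> v)) (at y)"
    and Lip: "L-lipschitz_on UNIV G"
    and sym: "transpose H = H" and pd: "\<And>v. v \<noteq> 0 \<Longrightarrow> 0 < v \<bullet> (H *v v)"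
    and lower: "\<And>v. lo * (v \<bullet> v) \<le> v \<bullet> (H *v v)" and upper: "\<And>v. v \<bullet> (H *v v) \<le> hi * (v \<bullet> v)"
    and "0 \<le> \<gamma>" and step: "\<gamma> * hi\<^sup>2 * L \<le> lo"
  shows "h (x - \<gamma> *\<^sub>R (H *v (G x - w)))
           \<le> h x - lo * \<gamma> / 2 * (norm (G x))\<^sup>2
             + (\<gamma> *\<^sub>R (H *v G x) - (L * \<gamma>\<^sup>2 * hi\<^sup>2) *\<^sub>R G x) \<bullet> w + L * hi\<^sup>2 / 2 * \<gamma>\<^sup>2 * (norm w)\<^sup>2"
proof -
  define g where "g = G x"
  define e where "e = \<gamma> *\<^sub>R (H *v (g - w))"
  have L: "0 \<le> L" using Lip by (rule lipschitz_on_nonneg)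
  have "h (x - e) \<le> h x - g \<bullet> e + L / 2 * (norm e)\<^sup>2"
    using lipschitz_gradient_upper_bound[OF deriv Lip, of "x - e" x] by (simp add: g_def)
  moreover have "g \<bullet> e = \<gamma> * (g \<bullet> (H *v g)) - \<gamma> * ((H *v g) \<bullet> w)"
    using matrix_vector_inner_symmetric[OF sym, of g w]
    by (simp add: e_def matrix_vector_mult_diff_distrib inner_diff_right inner_commute[of "H *v g"]
        right_diff_distrib)
  moreover have "L / 2 * (norm e)\<^sup>2 \<le> L / 2 * (\<gamma>\<^sup>2 * hi\<^sup>2 * ((norm g)\<^sup>2 - 2 * (g \<bullet> w) + (norm w)\<^sup>2))"
  proof (rule mult_left_mono)
    have "norm (H *v (g - w)) \<le> hi * norm (g - w)"
      by (rule norm_matrix_vector_le[OF sym pd upper])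
    then have "(norm (H *v (g - w)))\<^sup>2 \<le> hi\<^sup>2 * (norm (g - w))\<^sup>2"
      by (metis norm_ge_zero power_mono power_mult_distrib)
    moreover have "(norm (g - w))\<^sup>2 = (norm g)\<^sup>2 - 2 * (g \<bullet> w) + (norm w)\<^sup>2"
      using dot_norm_neg[of g w] by simp
    ultimately show "(norm e)\<^sup>2 \<le> \<gamma>\<^sup>2 * hi\<^sup>2 * ((norm g)\<^sup>2 - 2 * (g \<bullet> w) + (norm w)\<^sup>2)"
      using \<open>0 \<le> \<gamma>\<close> by (simp add: e_def power_mult_distrib mult_left_mono mult.assoc)
  qed (use L in simp)
  moreover have "lo * \<gamma> * (norm g)\<^sup>2 \<le> \<gamma> * (g \<bullet> (H *v g))"
    using mult_left_mono[OF lower[of g] \<open>0 \<le> \<gamma>\<close>] by (simp add: power2_norm_eq_inner algebra_simps)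
  moreover have "L * \<gamma>\<^sup>2 * hi\<^sup>2 * (norm g)\<^sup>2 \<le> lo * \<gamma> * (norm g)\<^sup>2"
    using mult_right_mono[OF mult_left_mono[OF step \<open>0 \<le> \<gamma>\<close>], of "(norm g)\<^sup>2"]
    by (simp add: power2_eq_square algebra_simps)
  ultimately show ?thesis
    unfolding g_def[symmetric] e_def[symmetric] inner_diff_left inner_scaleR_left
    by (simp add: algebra_simps)
qed

lemma regf_preconditioned_step_bound:
  fixes f :: "real^'n \<Rightarrow> real" and H :: "real^'n^'n"
  assumes deriv: "\<And>y. (f has_derivative (\<lambda>h. gf y \<bullet> h)) (at y)"
    and Lip: "L-lipschitz_on UNIV gf" and cvx: "convex_on UNIV f"
    and sym: "transpose H = H" and pd: "\<And>v. v \<noteq> 0 \<Longrightarrow> 0 < v \<bullet> (H *v v)"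
    and lower: "\<And>v. lo * (v \<bullet> v) \<le> v \<bullet> (H *v v)" and upper: "\<And>v. v \<bullet> (H *v v) \<le> hi * (v \<bullet> v)"
    and "0 < \<mu>" "\<mu>' \<le> \<mu>" "0 \<le> \<gamma>" and step: "\<gamma> * hi\<^sup>2 * (L + \<mu>) \<le> lo"
    and g: "g = gf x + \<mu> *\<^sub>R (x - x0)"
  shows "regf f x0 \<mu>' (x - \<gamma> *\<^sub>R (H *v (g - w))) - f z
           \<le> (1 - lo * \<mu> * \<gamma>) * (regf f x0 \<mu> x - f z) + lo * (norm (z - x0))\<^sup>2 / 2 * \<mu>\<^sup>2 * \<gamma>
             + (\<gamma> *\<^sub>R (H *v g) - ((L + \<mu>) * \<gamma>\<^sup>2 * hi\<^sup>2) *\<^sub>R g) \<bullet> w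
             + (L + \<mu>) * hi\<^sup>2 / 2 * \<gamma>\<^sup>2 * (norm w)\<^sup>2"
proof -
  let ?x' = "x - \<gamma> *\<^sub>R (H *v (g - w))"
  have "0 \<le> L" using Lip by (rule lipschitz_on_nonneg)
  with \<open>0 < \<mu>\<close> \<open>0 \<le> \<gamma>\<close> have "0 \<le> \<gamma> * hi\<^sup>2 * (L + \<mu>)" by simp
  with step \<open>0 \<le> \<gamma>\<close> have "0 \<le> lo * \<gamma>" by simp
  have "regf f x0 \<mu>' ?x' \<le> regf f x0 \<mu> ?x'"
    using \<open>\<mu>' \<le> \<mu>\<close> by (simp add: regf_def mult_right_mono)
  also have "\<dots> \<le> regf f x0 \<mu> x - lo * \<gamma> / 2 * (norm g)\<^sup>2
      + (\<gamma> *\<^sub>R (H *v g) - ((L + \<mu>) * \<gamma>\<^sup>2 * hi\<^sup>2) *\<^sub>R g) \<bullet> w + (L + \<mu>) * hi\<^sup>2 / 2 * \<gamma>\<^sup>2 * (norm w)\<^sup>2"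
    using preconditioned_gradient_step_descent[OF regf_has_derivative[OF deriv]
        lipschitz_on_regf_gradient[OF Lip] sym pd lower upper \<open>0 \<le> \<gamma>\<close> step, of x0 x w] \<open>0 < \<mu>\<close>
    by (simp add: g)
  finally have descent: "regf f x0 \<mu>' ?x' \<le> regf f x0 \<mu> x - lo * \<gamma> / 2 * (norm g)\<^sup>2
      + (\<gamma> *\<^sub>R (H *v g) - ((L + \<mu>) * \<gamma>\<^sup>2 * hi\<^sup>2) *\<^sub>R g) \<bullet> w + (L + \<mu>) * hi\<^sup>2 / 2 * \<gamma>\<^sup>2 * (norm w)\<^sup>2" .
  have "\<mu> * (regf f x0 \<mu> x - regf f x0 \<mu> z) \<le> (norm g)\<^sup>2 / 2"
    unfolding g by (rule strongly_convex_gradient_dominated[OF \<open>0 < \<mu>\<close> regf_strongly_convex[OF deriv cvx]])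
  from mult_left_mono[OF this \<open>0 \<le> lo * \<gamma>\<close>]
  have "lo * \<gamma> * (\<mu> * (regf f x0 \<mu> x - regf f x0 \<mu> z)) \<le> lo * \<gamma> / 2 * (norm g)\<^sup>2"
    by simp
  moreover have "regf f x0 \<mu> z = f z + \<mu> / 2 * (norm (z - x0))\<^sup>2"
    by (simp add: regf_def)
  ultimately show ?thesis
    using descent by (simp add: algebra_simps power2_eq_square)
qed

lemma closed_solset:
  fixes f :: "'a::topological_space \<Rightarrow> real"
  assumes "continuous_on UNIV f"
  shows "closed (solset f)"
proof -
  have "solset f = (\<Inter>y. {x. f x \<le> f y})"
    by (auto simp: solset_def)
  then show ?thesis
    using assms by (auto intro!: closed_INT closed_Collect_le continuous_on_const)
qed

lemma optval_eq_solset: "z \<in> solset f \<Longrightarrow> optval f = f z"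
  unfolding optval_def solset_def by (intro cInf_eq_minimum) auto

lemma solset_nearest_point:
  fixes f :: "'a::euclidean_space \<Rightarrow> real"
  assumes "continuous_on UNIV f" and "solset f \<noteq> {}"
  obtains z where "optval f = f z" and "infdist x0 (solset f) = norm (z - x0)"
proof -
  obtain z where z: "z \<in> solset f" and "infdist x0 (solset f) = dist x0 z"
    using infdist_attains_inf[OF closed_solset[OF assms(1)] assms(2)] by blast
  show ?thesis
  proof (rule that)
    show "optval f = f z" using z by (rule optval_eq_solset)
    show "infdist x0 (solset f) = norm (z - x0)"
      using \<open>infdist x0 (solset f) = dist x0 z\<close> by (simp add: dist_norm norm_minus_commute)
  qed
qed

section \<open>Square-integrable random vectors\<close>

lemma borel_measurable_matrix_vector_mult [measurable]:
  fixes A :: "'a \<Rightarrow> real^'n^'m" and v :: "'a \<Rightarrow> real^'n"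
  assumes "A \<in> borel_measurable N" "v \<in> borel_measurable N"
  shows "(\<lambda>\<omega>. A \<omega> *v v \<omega>) \<in> borel_measurable N"
proof -
  have "continuous_on UNIV (\<lambda>p :: (real^'n^'m) \<times> (real^'n). fst p *v snd p)"
    unfolding matrix_vector_mult_def by (intro continuous_intros continuous_on_vec_lambda)
  from borel_measurable_continuous_Pair[OF assms this] show ?thesis by simp
qed

lemma integrable_bounded_by_norm_mult:
  fixes u :: "'a \<Rightarrow> 'b::real_normed_vector" and v :: "'a \<Rightarrow> 'c::real_normed_vector"
  assumes "h \<in> borel_measurable M"
    and "integrable M (\<lambda>\<omega>. (norm (u \<omega>))\<^sup>2)" "integrable M (\<lambda>\<omega>. (norm (v \<omega>))\<^sup>2)"
    and bound: "\<And>\<omega>. \<bar>h \<omega>\<bar> \<le> norm (u \<omega>) * norm (v \<omega>)"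
  shows "integrable M h"
proof (rule Bochner_Integration.integrable_bound)
  show "integrable M (\<lambda>\<omega>. (norm (u \<omega>))\<^sup>2 + (norm (v \<omega>))\<^sup>2)"
    using assms by auto
  show "AE \<omega> in M. norm (h \<omega>) \<le> norm ((norm (u \<omega>))\<^sup>2 + (norm (v \<omega>))\<^sup>2)"
  proof (intro AE_I2)
    fix \<omega>
    have "norm (u \<omega>) * norm (v \<omega>) \<le> (norm (u \<omega>))\<^sup>2 + (norm (v \<omega>))\<^sup>2"
      using sum_squares_bound[of "norm (u \<omega>)" "norm (v \<omega>)"]
        mult_nonneg_nonneg[OF norm_ge_zero norm_ge_zero, of "u \<omega>" "v \<omega>"] by linarith
    then show "norm (h \<omega>) \<le> norm ((norm (u \<omega>))\<^sup>2 + (norm (v \<omega>))\<^sup>2)"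
      using bound[of \<omega>] by simp
  qed
qed (rule assms)

lemma integrable_power2_norm_bounded:
  fixes u :: "'a \<Rightarrow> 'b::real_normed_vector"
    and z1 :: "'a \<Rightarrow> 'c::real_normed_vector" and z2 :: "'a \<Rightarrow> 'd::real_normed_vector"
  assumes "finite_measure M" and "u \<in> borel_measurable M"
    and "integrable M (\<lambda>\<omega>. (norm (z1 \<omega>))\<^sup>2)" "integrable M (\<lambda>\<omega>. (norm (z2 \<omega>))\<^sup>2)"
    and bound: "AE \<omega> in M. norm (u \<omega>) \<le> a + b * norm (z1 \<omega>) + c * norm (z2 \<omega>)"
  shows "integrable M (\<lambda>\<omega>. (norm (u \<omega>))\<^sup>2)"
proof (rule Bochner_Integration.integrable_bound)
  show "integrable M (\<lambda>\<omega>. 3 * (a\<^sup>2 + b\<^sup>2 * (norm (z1 \<omega>))\<^sup>2 + c\<^sup>2 * (norm (z2 \<omega>))\<^sup>2))"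
    using assms finite_measure.integrable_const[OF \<open>finite_measure M\<close>]
    by (intro integrable_mult_right Bochner_Integration.integrable_add) auto
  show "(\<lambda>\<omega>. (norm (u \<omega>))\<^sup>2) \<in> borel_measurable M"
    using \<open>u \<in> borel_measurable M\<close> by measurable
  show "AE \<omega> in M. norm ((norm (u \<omega>))\<^sup>2) \<le> norm (3 * (a\<^sup>2 + b\<^sup>2 * (norm (z1 \<omega>))\<^sup>2 + c\<^sup>2 * (norm (z2 \<omega>))\<^sup>2))"
    using bound
  proof eventually_elim
    case (elim \<omega>)
    let ?p = "b * norm (z1 \<omega>)" and ?q = "c * norm (z2 \<omega>)"
    have "(norm (u \<omega>))\<^sup>2 \<le> (a + ?p + ?q)\<^sup>2"
      using elim by (intro power_mono) auto
    also have "\<dots> \<le> 3 * (a\<^sup>2 + ?p\<^sup>2 + ?q\<^sup>2)"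
      using sum_squares_bound[of a ?p] sum_squares_bound[of a ?q] sum_squares_bound[of ?p ?q]
      unfolding power2_sum by (simp add: distrib_right)
    finally show ?case by (simp add: power_mult_distrib)
  qed
qed

context sigma_finite_subalgebra
begin

lemma real_cond_exp_inner_eq_0:
  fixes c w :: "'a \<Rightarrow> real^'n"
  assumes c: "c \<in> borel_measurable F" and w: "w \<in> borel_measurable M"
    and "integrable M (\<lambda>\<omega>. (norm (c \<omega>))\<^sup>2)" "integrable M (\<lambda>\<omega>. (norm (w \<omega>))\<^sup>2)"
    and centered: "\<And>i. AE \<omega> in M. real_cond_exp M F (\<lambda>\<omega>. w \<omega> $ i) \<omega> = 0"
  shows "AE \<omega> in M. real_cond_exp M F (\<lambda>\<omega>. c \<omega> \<bullet> w \<omega>) \<omega> = 0"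
proof -
  have c_nth: "(\<lambda>\<omega>. c \<omega> $ i) \<in> borel_measurable F" for i
    using measurable_compose[OF c borel_measurable_nth] by simp
  have w_nth: "(\<lambda>\<omega>. w \<omega> $ i) \<in> borel_measurable M" for i
    using measurable_compose[OF w borel_measurable_nth] by simp
  have int: "integrable M (\<lambda>\<omega>. c \<omega> $ i * w \<omega> $ i)" for i
  proof (rule integrable_bounded_by_norm_mult[OF _ assms(3,4)])
    show "(\<lambda>\<omega>. c \<omega> $ i * w \<omega> $ i) \<in> borel_measurable M"
      using measurable_from_subalg[OF subalg c_nth] w_nth by measurable
    show "\<bar>c \<omega> $ i * w \<omega> $ i\<bar> \<le> norm (c \<omega>) * norm (w \<omega>)" for \<omega>
      unfolding abs_mult by (intro mult_mono component_le_norm_cart) auto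
  qed
  have "AE \<omega> in M. real_cond_exp M F (\<lambda>\<omega>. \<Sum>i\<in>UNIV. c \<omega> $ i * w \<omega> $ i) \<omega>
      = (\<Sum>i\<in>UNIV. real_cond_exp M F (\<lambda>\<omega>. c \<omega> $ i * w \<omega> $ i) \<omega>)"
    by (rule real_cond_exp_sum[OF int])
  moreover have "AE \<omega> in M. \<forall>i. real_cond_exp M F (\<lambda>\<omega>. c \<omega> $ i * w \<omega> $ i) \<omega>
      = c \<omega> $ i * real_cond_exp M F (\<lambda>\<omega>. w \<omega> $ i) \<omega>"
    unfolding AE_all_countable by (intro allI real_cond_exp_mult[OF c_nth w_nth int])
  moreover have "AE \<omega> in M. \<forall>i. real_cond_exp M F (\<lambda>\<omega>. w \<omega> $ i) \<omega> = 0"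
    unfolding AE_all_countable using centered by blast
  ultimately show ?thesis
    unfolding inner_vec_def by eventually_elim simp
qed

lemma real_cond_exp_le_drop_centered:
  assumes le: "AE \<omega> in M. X \<omega> \<le> A \<omega> + S \<omega> + Q \<omega>"
    and "integrable M X" "integrable M A" "A \<in> borel_measurable F" "integrable M S" "integrable M Q"
    and centered: "AE \<omega> in M. real_cond_exp M F S \<omega> = 0"
  shows "AE \<omega> in M. real_cond_exp M F X \<omega> \<le> A \<omega> + real_cond_exp M F Q \<omega>"
proof -
  have "AE \<omega> in M. real_cond_exp M F X \<omega> \<le> real_cond_exp M F (\<lambda>\<omega>. A \<omega> + S \<omega> + Q \<omega>) \<omega>"
    using real_cond_exp_mono[OF le] assms by auto
  moreover have "AE \<omega> in M. real_cond_exp M F (\<lambda>\<omega>. A \<omega> + S \<omega> + Q \<omega>) \<omega>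
      = real_cond_exp M F (\<lambda>\<omega>. A \<omega> + S \<omega>) \<omega> + real_cond_exp M F Q \<omega>"
    using real_cond_exp_add[of "\<lambda>\<omega>. A \<omega> + S \<omega>" Q] assms by auto
  moreover have "AE \<omega> in M. real_cond_exp M F (\<lambda>\<omega>. A \<omega> + S \<omega>) \<omega>
      = real_cond_exp M F A \<omega> + real_cond_exp M F S \<omega>"
    using real_cond_exp_add[of A S] assms by auto
  moreover have "AE \<omega> in M. real_cond_exp M F A \<omega> = A \<omega>"
    using real_cond_exp_F_meas assms by blast
  ultimately show ?thesis
    using centered by eventually_elim simp
qed

end

section \<open>One step of the preconditioned method\<close>

text \<open>
  One iteration: \<open>F\<close>, \<open>X\<close>, \<open>X'\<close>, \<open>H\<close> and \<open>W\<close> stand for \<open>\<F>\<^sub>k\<close>, \<open>x\<^sub>k\<close>, \<open>x\<^sub>k\<^sub>+\<^sub>1\<close>, \<open>H\<^sub>k\<close>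
  and \<open>w\<^sub>k\<^sub>,\<^sub>N\<^sub>k\<close>, so the sampled gradient of \<open>f\<^sub>\<mu>\<close> is \<open>G - W\<close>.
\<close>

locale preconditioned_gradient_step = finite_measure_subalgebra M F
  for M :: "'a measure" and F +
  fixes f :: "real^'n \<Rightarrow> real" and gf :: "real^'n \<Rightarrow> real^'n" and L :: real and x0 :: "real^'n"
    and X X' W :: "'a \<Rightarrow> real^'n" and H :: "'a \<Rightarrow> real^'n^'n" and \<gamma> \<mu> lo hi :: real
  assumes f_deriv: "\<And>y. (f has_derivative (\<lambda>h. gf y \<bullet> h)) (at y)"
    and gf_lipschitz: "L-lipschitz_on UNIV gf"
    and f_convex: "convex_on UNIV f"
    and X_measurable: "X \<in> borel_measurable F"
    and H_measurable: "H \<in> borel_measurable F"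
    and W_measurable: "W \<in> borel_measurable M"
    and H_sym: "AE \<omega> in M. transpose (H \<omega>) = H \<omega>"
    and H_pd: "AE \<omega> in M. \<forall>v. v \<noteq> 0 \<longrightarrow> 0 < v \<bullet> (H \<omega> *v v)"
    and H_bounds: "AE \<omega> in M. \<forall>v. lo * (v \<bullet> v) \<le> v \<bullet> (H \<omega> *v v) \<and> v \<bullet> (H \<omega> *v v) \<le> hi * (v \<bullet> v)"
    and W_square_integrable: "integrable M (\<lambda>\<omega>. (norm (W \<omega>))\<^sup>2)"
    and W_centered: "\<And>i. AE \<omega> in M. real_cond_exp M F (\<lambda>\<omega>. W \<omega> $ i) \<omega> = 0"
    and X_square_integrable: "integrable M (\<lambda>\<omega>. (norm (X \<omega> - x0))\<^sup>2)"
    and pos: "0 < \<gamma>" "0 < \<mu>" "0 < hi"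
    and step_size: "\<gamma> * hi\<^sup>2 * (L + \<mu>) \<le> lo"
    and X'_eq: "\<And>\<omega>. X' \<omega> = X \<omega> - \<gamma> *\<^sub>R (H \<omega> *v (gf (X \<omega>) + \<mu> *\<^sub>R (X \<omega> - x0) - W \<omega>))"
begin

abbreviation G :: "'a \<Rightarrow> real^'n" where
  "G \<omega> \<equiv> gf (X \<omega>) + \<mu> *\<^sub>R (X \<omega> - x0)"

lemma L_nonneg: "0 \<le> L"
  using gf_lipschitz by (rule lipschitz_on_nonneg)

lemma G_measurable: "G \<in> borel_measurable F"
proof -
  have [measurable]: "X \<in> borel_measurable F" by (rule X_measurable)
  have [measurable]: "(\<lambda>\<omega>. gf (X \<omega>)) \<in> borel_measurable F"
    using borel_measurable_continuous_on[OF lipschitz_on_continuous_on[OF gf_lipschitz] X_measurable] .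
  show ?thesis by measurable
qed

lemma norm_G_le: "norm (G \<omega>) \<le> norm (gf x0) + (L + \<mu>) * norm (X \<omega> - x0)"
  using lipschitz_on_normD[OF lipschitz_on_regf_gradient[OF gf_lipschitz, of \<mu> x0], of "X \<omega>" x0]
    norm_triangle_sub[of "G \<omega>" "gf x0"] pos by simp

lemma AE_H_spectral:
  "AE \<omega> in M. transpose (H \<omega>) = H \<omega> \<and> (\<forall>v. v \<noteq> 0 \<longrightarrow> 0 < v \<bullet> (H \<omega> *v v))
     \<and> (\<forall>v. lo * (v \<bullet> v) \<le> v \<bullet> (H \<omega> *v v)) \<and> (\<forall>v. v \<bullet> (H \<omega> *v v) \<le> hi * (v \<bullet> v))"
  using H_sym H_pd H_bounds by eventually_elim blast

lemma X'_square_integrable: "integrable M (\<lambda>\<omega>. (norm (X' \<omega> - x0))\<^sup>2)"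
proof (rule integrable_power2_norm_bounded[OF finite_measure_axioms _ X_square_integrable W_square_integrable])
  show "(\<lambda>\<omega>. X' \<omega> - x0) \<in> borel_measurable M"
    using measurable_from_subalg[OF subalg X_measurable] measurable_from_subalg[OF subalg H_measurable]
      measurable_from_subalg[OF subalg G_measurable] W_measurable
    unfolding X'_eq by measurable
  show "AE \<omega> in M. norm (X' \<omega> - x0) \<le> \<gamma> * hi * norm (gf x0)
      + (1 + \<gamma> * hi * (L + \<mu>)) * norm (X \<omega> - x0) + \<gamma> * hi * norm (W \<omega>)"
    using AE_H_spectral
  proof eventually_elim
    case (elim \<omega>)
    have "norm (H \<omega> *v (G \<omega> - W \<omega>)) \<le> hi * norm (G \<omega> - W \<omega>)"
      using elim by (intro norm_matrix_vector_le) auto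
    also have "\<dots> \<le> hi * (norm (gf x0) + (L + \<mu>) * norm (X \<omega> - x0) + norm (W \<omega>))"
      using norm_G_le[of \<omega>] norm_triangle_ineq4[of "G \<omega>" "W \<omega>"] pos by (intro mult_left_mono) auto
    finally have "\<gamma> * norm (H \<omega> *v (G \<omega> - W \<omega>))
        \<le> \<gamma> * (hi * (norm (gf x0) + (L + \<mu>) * norm (X \<omega> - x0) + norm (W \<omega>)))"
      using pos by (intro mult_left_mono) auto
    moreover have "norm (X' \<omega> - x0) \<le> norm (X \<omega> - x0) + \<gamma> * norm (H \<omega> *v (G \<omega> - W \<omega>))"
    proof -
      have "X' \<omega> - x0 = (X \<omega> - x0) - \<gamma> *\<^sub>R (H \<omega> *v (G \<omega> - W \<omega>))"
        by (simp add: X'_eq)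
      then have "norm (X' \<omega> - x0) \<le> norm (X \<omega> - x0) + norm (\<gamma> *\<^sub>R (H \<omega> *v (G \<omega> - W \<omega>)))"
        by (metis norm_triangle_ineq4)
      then show ?thesis using pos by simp
    qed
    ultimately show ?case by (simp add: algebra_simps)
  qed
qed

abbreviation noise_coeff :: "'a \<Rightarrow> real^'n" where
  "noise_coeff \<omega> \<equiv> \<gamma> *\<^sub>R (H \<omega> *v G \<omega>) - ((L + \<mu>) * \<gamma>\<^sup>2 * hi\<^sup>2) *\<^sub>R G \<omega>"

lemma noise_coeff_measurable: "noise_coeff \<in> borel_measurable F"
proof -
  have [measurable]: "H \<in> borel_measurable F" "G \<in> borel_measurable F"
    using H_measurable G_measurable .
  show ?thesis by measurable
qed

lemma noise_coeff_square_integrable: "integrable M (\<lambda>\<omega>. (norm (noise_coeff \<omega>))\<^sup>2)"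
proof (rule integrable_power2_norm_bounded[OF finite_measure_axioms
      measurable_from_subalg[OF subalg noise_coeff_measurable] X_square_integrable W_square_integrable])
  define C where "C = \<gamma> * hi + (L + \<mu>) * \<gamma>\<^sup>2 * hi\<^sup>2"
  show "AE \<omega> in M. norm (noise_coeff \<omega>)
      \<le> C * norm (gf x0) + C * (L + \<mu>) * norm (X \<omega> - x0) + 0 * norm (W \<omega>)"
    using AE_H_spectral
  proof eventually_elim
    case (elim \<omega>)
    have "norm (\<gamma> *\<^sub>R (H \<omega> *v g) - k *\<^sub>R g) \<le> (\<gamma> * hi + k) * norm g" if "0 \<le> k" for g k
    proof -
      have "norm (H \<omega> *v g) \<le> hi * norm g"
        using elim by (intro norm_matrix_vector_le) auto
      then have "\<gamma> * norm (H \<omega> *v g) \<le> \<gamma> * (hi * norm g)"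
        using pos by (intro mult_left_mono) auto
      moreover have "norm (\<gamma> *\<^sub>R (H \<omega> *v g) - k *\<^sub>R g) \<le> \<gamma> * norm (H \<omega> *v g) + k * norm g"
        using norm_triangle_ineq4[of "\<gamma> *\<^sub>R (H \<omega> *v g)" "k *\<^sub>R g"] pos that by simp
      ultimately have "norm (\<gamma> *\<^sub>R (H \<omega> *v g) - k *\<^sub>R g) \<le> \<gamma> * (hi * norm g) + k * norm g"
        by linarith
      then show ?thesis by (simp only: distrib_right mult.assoc)
    qed
    then have "norm (noise_coeff \<omega>) \<le> C * norm (G \<omega>)"
      unfolding C_def using pos L_nonneg by simp
    also have "\<dots> \<le> C * (norm (gf x0) + (L + \<mu>) * norm (X \<omega> - x0))"
      using norm_G_le[of \<omega>] by (rule mult_left_mono) (use pos L_nonneg in \<open>simp add: C_def\<close>)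
    finally show ?case by (simp add: algebra_simps)
  qed
qed

lemma noise_coeff_inner_integrable: "integrable M (\<lambda>\<omega>. noise_coeff \<omega> \<bullet> W \<omega>)"
proof (rule integrable_bounded_by_norm_mult[OF _ noise_coeff_square_integrable W_square_integrable])
  show "(\<lambda>\<omega>. noise_coeff \<omega> \<bullet> W \<omega>) \<in> borel_measurable M"
    using measurable_from_subalg[OF subalg noise_coeff_measurable] W_measurable
    by (rule borel_measurable_inner)
qed (rule Cauchy_Schwarz_ineq2)

lemma f_X_measurable: "(\<lambda>\<omega>. f (X \<omega>)) \<in> borel_measurable F"
proof (rule borel_measurable_continuous_on[OF _ X_measurable])
  show "continuous_on UNIV f"
    using f_deriv by (meson continuous_at_imp_continuous_on has_derivative_continuous)
qed

lemma regf_step_le: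
  assumes "\<mu>' \<le> \<mu>"
  shows "AE \<omega> in M. regf f x0 \<mu>' (X' \<omega>) - f z
    \<le> (1 - lo * \<mu> * \<gamma>) * (regf f x0 \<mu> (X \<omega>) - f z) + lo * (norm (z - x0))\<^sup>2 / 2 * \<mu>\<^sup>2 * \<gamma>
      + noise_coeff \<omega> \<bullet> W \<omega> + (L + \<mu>) * hi\<^sup>2 / 2 * \<gamma>\<^sup>2 * (norm (W \<omega>))\<^sup>2"
  using AE_H_spectral
proof eventually_elim
  case (elim \<omega>)
  show ?case
    unfolding X'_eq
    by (rule regf_preconditioned_step_bound[OF f_deriv gf_lipschitz f_convex])
      (use elim pos step_size assms in auto)
qed

lemma real_cond_exp_regf_step_le:
  assumes "integrable M (\<lambda>\<omega>. f (X \<omega>))" "integrable M (\<lambda>\<omega>. f (X' \<omega>))" and "\<mu>' \<le> \<mu>"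
    and variance: "AE \<omega> in M. real_cond_exp M F (\<lambda>\<omega>. (norm (W \<omega>))\<^sup>2) \<omega> \<le> V \<omega>"
  shows "AE \<omega> in M. real_cond_exp M F (\<lambda>\<omega>. regf f x0 \<mu>' (X' \<omega>)) \<omega> - f z
    \<le> (1 - lo * \<mu> * \<gamma>) * (regf f x0 \<mu> (X \<omega>) - f z) + lo * (norm (z - x0))\<^sup>2 / 2 * \<mu>\<^sup>2 * \<gamma>
      + (L + \<mu>) * hi\<^sup>2 / 2 * \<gamma>\<^sup>2 * V \<omega>"
proof -
  define K where "K = (L + \<mu>) * hi\<^sup>2 / 2 * \<gamma>\<^sup>2"
  define A where "A \<omega> = f z + (1 - lo * \<mu> * \<gamma>) * (regf f x0 \<mu> (X \<omega>) - f z)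
    + lo * (norm (z - x0))\<^sup>2 / 2 * \<mu>\<^sup>2 * \<gamma>" for \<omega>
  have "0 \<le> K"
    unfolding K_def using L_nonneg pos by simp
  have [measurable]: "X \<in> borel_measurable F" "(\<lambda>\<omega>. f (X \<omega>)) \<in> borel_measurable F"
    using X_measurable f_X_measurable .
  have "AE \<omega> in M. regf f x0 \<mu>' (X' \<omega>) \<le> A \<omega> + noise_coeff \<omega> \<bullet> W \<omega> + K * (norm (W \<omega>))\<^sup>2"
    using regf_step_le[OF \<open>\<mu>' \<le> \<mu>\<close>, where z = z] by eventually_elim (simp add: A_def K_def)
  then have "AE \<omega> in M. real_cond_exp M F (\<lambda>\<omega>. regf f x0 \<mu>' (X' \<omega>)) \<omega>
      \<le> A \<omega> + real_cond_exp M F (\<lambda>\<omega>. K * (norm (W \<omega>))\<^sup>2) \<omega>"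
  proof (rule real_cond_exp_le_drop_centered)
    show "integrable M (\<lambda>\<omega>. regf f x0 \<mu>' (X' \<omega>))"
      using assms(2) X'_square_integrable by (simp add: regf_def[abs_def])
    show "integrable M A"
      using assms(1) X_square_integrable by (simp add: A_def[abs_def] regf_def)
    show "A \<in> borel_measurable F"
      unfolding A_def[abs_def] regf_def by measurable
    show "integrable M (\<lambda>\<omega>. K * (norm (W \<omega>))\<^sup>2)"
      using W_square_integrable by simp
    show "integrable M (\<lambda>\<omega>. noise_coeff \<omega> \<bullet> W \<omega>)"
      by (rule noise_coeff_inner_integrable)
    show "AE \<omega> in M. real_cond_exp M F (\<lambda>\<omega>. noise_coeff \<omega> \<bullet> W \<omega>) \<omega> = 0"
      using noise_coeff_measurable W_measurable noise_coeff_square_integrable W_square_integrable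
        W_centered by (rule real_cond_exp_inner_eq_0)
  qed
  moreover have "AE \<omega> in M. real_cond_exp M F (\<lambda>\<omega>. K * (norm (W \<omega>))\<^sup>2) \<omega>
      = K * real_cond_exp M F (\<lambda>\<omega>. (norm (W \<omega>))\<^sup>2) \<omega>"
    using W_square_integrable by (rule real_cond_exp_cmult)
  moreover note variance
  ultimately show ?thesis
  proof eventually_elim
    case (elim \<omega>)
    with mult_left_mono[OF elim(3) \<open>0 \<le> K\<close>] show ?case
      unfolding K_def[symmetric] by (simp add: A_def)
  qed
qed

end

lemma step_size_condition_mono:
  fixes \<gamma> hi L lo \<mu> \<mu>\<^sub>0 :: real
  assumes "\<gamma> \<le> lo / (hi\<^sup>2 * (L + \<mu>\<^sub>0))" and "0 < \<gamma>" "0 < hi" "0 < L + \<mu>\<^sub>0" "\<mu> \<le> \<mu>\<^sub>0"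
  shows "\<gamma> * hi\<^sup>2 * (L + \<mu>) \<le> lo"
proof -
  have "\<gamma> * hi\<^sup>2 * (L + \<mu>) \<le> \<gamma> * hi\<^sup>2 * (L + \<mu>\<^sub>0)"
    using assms by (intro mult_left_mono) auto
  also have "\<dots> \<le> lo"
    using assms(1-4) by (simp add: le_divide_eq mult.assoc)
  finally show ?thesis .
qed

lemma sample_mean_add_const:
  fixes a :: "nat \<Rightarrow> 'a::real_vector"
  assumes "0 < N"
  shows "(1 / real N) *\<^sub>R (\<Sum>j\<in>{1..N}. a j + b) = (1 / real N) *\<^sub>R (\<Sum>j\<in>{1..N}. a j) + b"
  using assms by (simp add: sum.distrib scaleR_add_right sum_constant_scaleR)

theorem mainTheorem9:
  fixes M :: "'w measure"
    and Fil :: "nat \<Rightarrow> 'w measure"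
    and P :: "'s measure"
    and F :: "real^'n \<Rightarrow> 's \<Rightarrow> real"
    and gF :: "real^'n \<Rightarrow> 's \<Rightarrow> real^'n"
    and f :: "real^'n \<Rightarrow> real"
    and gf :: "real^'n \<Rightarrow> real^'n"
    and L \<nu>1 \<nu>2 lam_lo :: real
    and lam_hi \<gamma> \<mu> :: "nat \<Rightarrow> real"
    and N :: "nat \<Rightarrow> nat"
    and \<xi> :: "nat \<Rightarrow> nat \<Rightarrow> 'w \<Rightarrow> 's"
    and x :: "nat \<Rightarrow> 'w \<Rightarrow> real^'n"
    and H :: "nat \<Rightarrow> 'w \<Rightarrow> real^'n^'n"
    and x0 :: "real^'n"
    and wbar :: "nat \<Rightarrow> 'w \<Rightarrow> real^'n"
  assumes M: "prob_space M"
    and P: "prob_space P"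
    and Fil_sub: "\<And>k. subalgebra M (Fil k)"
    and Fil_mono: "\<And>k. sets (Fil k) \<subseteq> sets (Fil (Suc k))"
    and F_int: "\<And>y. integrable P (F y)"
    and f_def: "\<And>y. f y = (\<integral>\<omega>. F y \<omega> \<partial>P)"
    and Xstar_ne: "solset f \<noteq> {}"
    and F_convex: "\<And>\<omega>. convex_on UNIV (\<lambda>y. F y \<omega>)"
    and F_grad: "\<And>\<omega> y. ((\<lambda>z. F z \<omega>) has_derivative (\<lambda>h. gF y \<omega> \<bullet> h)) (at y)"
    and F_C1: "\<And>\<omega>. continuous_on UNIV (\<lambda>y. gF y \<omega>)"
    and f_grad: "\<And>y. (f has_derivative (\<lambda>h. gf y \<bullet> h)) (at y)"
    and f_C1: "continuous_on UNIV gf"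
    and f_Lip: "L-lipschitz_on UNIV gf"
    and N_pos: "\<And>k. N k > 0"
    and \<xi>_meas: "\<And>j k. \<xi> j k \<in> measurable M P"
    and x_init: "\<And>\<omega>. x 0 \<omega> = x0"
    and x_adapted: "\<And>k. x k \<in> borel_measurable (Fil k)"
    and wbar_def: "\<And>k \<omega>. wbar k \<omega> =
          gf (x k \<omega>) - (1 / real (N k)) *\<^sub>R (\<Sum>j\<in>{1..N k}. gF (x k \<omega>) (\<xi> j k \<omega>))"
    and \<nu>_pos: "\<nu>1 > 0" "\<nu>2 > 0"
    and wbar_int: "\<And>k. integrable M (wbar k)"
    and wbar_sq_int: "\<And>k. integrable M (\<lambda>\<omega>. (norm (wbar k \<omega>))\<^sup>2)"
    and wbar_var: "\<And>k. AE \<omega> in M. real_cond_exp M (Fil k) (\<lambda>\<omega>. (norm (wbar k \<omega>))\<^sup>2) \<omega>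
                       \<le> (\<nu>1\<^sup>2 * (norm (x k \<omega>))\<^sup>2 + \<nu>2\<^sup>2) / real (N k)"
    and wbar_unbiased: "\<And>k i. AE \<omega> in M. real_cond_exp M (Fil k) (\<lambda>\<omega>. wbar k \<omega> $ i) \<omega> = 0"
    and H_adapted: "\<And>k. H k \<in> borel_measurable (Fil k)"
    and H_sym: "\<And>k. AE \<omega> in M. transpose (H k \<omega>) = H k \<omega>"
    and H_pd: "\<And>k. AE \<omega> in M. \<forall>v. v \<noteq> 0 \<longrightarrow> v \<bullet> (H k \<omega> *v v) > 0"
    and H_bounds: "\<And>k. AE \<omega> in M. \<forall>v. lam_lo * (v \<bullet> v) \<le> v \<bullet> (H k \<omega> *v v)
                                        \<and> v \<bullet> (H k \<omega> *v v) \<le> lam_hi k * (v \<bullet> v)"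
    and lam_lo_pos: "lam_lo > 0"
    and lam_hi_pos: "\<And>k. lam_hi k > 0"
    and QG: "\<exists>\<alpha>>0. \<forall>y. f y \<ge> optval f + \<alpha> / 2 * (infdist y (solset f))\<^sup>2"
    and x_rec: "\<And>k \<omega>. x (Suc k) \<omega> = x k \<omega> - \<gamma> k *\<^sub>R (H k \<omega> *v
          ((1 / real (N k)) *\<^sub>R (\<Sum>j\<in>{1..N k}. gF (x k \<omega>) (\<xi> j k \<omega>) + \<mu> k *\<^sub>R (x k \<omega> - x0))))"
    and \<mu>_pos: "\<And>k. \<mu> k > 0"
    and \<mu>_noninc: "decseq \<mu>"
    and \<gamma>_pos: "\<And>k. \<gamma> k > 0"
    and \<gamma>_bound: "\<And>k. \<gamma> k \<le> lam_lo / ((lam_hi k)\<^sup>2 * (L + \<mu> 0))"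
    and f_x_int: "\<And>k. integrable M (\<lambda>\<omega>. f (x k \<omega>))"
  shows "\<forall>k. AE \<omega> in M.
           real_cond_exp M (Fil k) (\<lambda>\<omega>. regf f x0 (\<mu> (Suc k)) (x (Suc k) \<omega>)) \<omega> - optval f
         \<le> (1 - lam_lo * \<mu> k * \<gamma> k) * (regf f x0 (\<mu> k) (x k \<omega>) - optval f)
           + lam_lo * (infdist x0 (solset f))\<^sup>2 / 2 * (\<mu> k)\<^sup>2 * \<gamma> k
           + (L + \<mu> k) * (lam_hi k)\<^sup>2 * (\<nu>1\<^sup>2 * (norm (x k \<omega>))\<^sup>2 + \<nu>2\<^sup>2) / (2 * real (N k)) * (\<gamma> k)\<^sup>2"
proof -
  interpret prob_space M by (rule M)
  have f_convex: "convex_on UNIV f"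
    unfolding ext[OF f_def] by (rule convex_on_integral[OF F_convex F_int])
  have "continuous_on UNIV f"
    using f_grad by (meson continuous_at_imp_continuous_on has_derivative_continuous)
  then obtain z where opt: "optval f = f z" and dist: "infdist x0 (solset f) = norm (z - x0)"
    using solset_nearest_point[OF _ Xstar_ne] by blast
  have step_size: "\<gamma> j * (lam_hi j)\<^sup>2 * (L + \<mu> j) \<le> lam_lo" for j
    using lipschitz_on_nonneg[OF f_Lip] \<mu>_pos[of 0] \<mu>_noninc
    by (intro step_size_condition_mono[OF \<gamma>_bound \<gamma>_pos lam_hi_pos]) (auto simp: decseq_def)
  have step: "preconditioned_gradient_step M (Fil j) f gf L x0 (x j) (x (Suc j)) (wbar j) (H j)
      (\<gamma> j) (\<mu> j) lam_lo (lam_hi j)" if "integrable M (\<lambda>\<omega>. (norm (x j \<omega> - x0))\<^sup>2)" for j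
  proof (intro preconditioned_gradient_step.intro preconditioned_gradient_step_axioms.intro)
    show "finite_measure_subalgebra M (Fil j)"
      by (simp add: finite_measure_subalgebra_def finite_measure_subalgebra_axioms_def
          finite_measure_axioms Fil_sub)
    show "x (Suc j) \<omega> = x j \<omega> - \<gamma> j *\<^sub>R (H j \<omega> *v (gf (x j \<omega>) + \<mu> j *\<^sub>R (x j \<omega> - x0) - wbar j \<omega>))"
      for \<omega> unfolding x_rec[of j \<omega>] sample_mean_add_const[OF N_pos] wbar_def by (simp add: add.commute)
  qed (rule that f_grad f_Lip f_convex x_adapted H_adapted borel_measurable_integrable[OF wbar_int]
      H_sym H_pd H_bounds wbar_sq_int wbar_unbiased \<gamma>_pos \<mu>_pos lam_hi_pos step_size)+
  have "integrable M (\<lambda>\<omega>. (norm (x j \<omega> - x0))\<^sup>2)" for j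
    by (induction j) (simp_all add: x_init preconditioned_gradient_step.X'_square_integrable[OF step])
  then have "AE \<omega> in M. real_cond_exp M (Fil k) (\<lambda>\<omega>. regf f x0 (\<mu> (Suc k)) (x (Suc k) \<omega>)) \<omega> - f z
    \<le> (1 - lam_lo * \<mu> k * \<gamma> k) * (regf f x0 (\<mu> k) (x k \<omega>) - f z)
      + lam_lo * (norm (z - x0))\<^sup>2 / 2 * (\<mu> k)\<^sup>2 * \<gamma> k
      + (L + \<mu> k) * (lam_hi k)\<^sup>2 / 2 * (\<gamma> k)\<^sup>2 * ((\<nu>1\<^sup>2 * (norm (x k \<omega>))\<^sup>2 + \<nu>2\<^sup>2) / real (N k))" for k
    using \<mu>_noninc by (intro preconditioned_gradient_step.real_cond_exp_regf_step_le[OF step f_x_int f_x_int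
        _ wbar_var]) (auto simp: decseq_Suc_iff)
  then show ?thesis
    unfolding opt dist by (simp add: field_simps)
qed

end
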